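(* Let $T\in\mathcal{KC}(V)$ and $s,p\in\rho_S(T)$ with $s\notin[p]$. Then $$Q_{c,s}^{-1}(T)S_L^{-1}(p,s)+S_R^{-1}(s,p)Q_{c,p}^{-1}(T)=Q_{c,s}^{-1}(T)S_L^{-1}(p,T)+S_R^{-1}(s,\overline{T})Q_{c,p}^{-1}(T)=Q_{c,s}^{-1}(T)S_L^{-1}(p,\overline{T})+S_R^{-1}(s,T)Q_{c,p}^{-1}(T).$$
   Context: $\mathbb{H}$: quaternions $s=s_0+s_1e_1+s_2e_2+s_3e_3$ with $e_1^2=e_2^2=e_3^2=-1$, $e_1e_2=-e_2e_1=e_3$, $e_2e_3=-e_3e_2=e_1$, $e_3e_1=-e_1e_3=e_2$; $\overline{s}=s_0-s_1e_1-s_2e_2-s_3e_3$, $|s|$ Euclidean norm, $\mathbb{S}=\{s:s_0=0,|s|=1\}$, and $[p]=\{p_0+J|p-p_0|:J\in\mathbb{S}\}$. For quaternions $s,p$ with $s\notin[p]$, the Cauchy kernels are $S_L^{-1}(p,s):=(p-\overline{s})(p^2-2s_0p+|s|^2)^{-1}$ and $S_R^{-1}(s,p):=(s^2-2p_0s+|p|^2)^{-1}(s-\overline{p})$. $V$ is a two-sided Banach space over $\mathbb{H}$, $\mathcal{I}$ the identity. $\mathcal{KC}(V)$: closed right-linear operators $T$ with two-sided linear domain, $T=T_0+e_1T_1+e_2T_2+e_3T_3$ with two-sided linear $T_i$, $\operatorname{dom}(T_i)=\operatorname{dom}(T)$, $\operatorname{dom}(T^2)\subseteq\operatorname{dom}(T_iT_j)$,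 $T_iT_j=T_jT_i$ on $\operatorname{dom}(T^2)$. $\overline{T}:=T_0-e_1T_1-e_2T_2-e_3T_3\in\mathcal{KC}(V)$ (with components $T_0,-T_1,-T_2,-T_3$), $|T|^2:=\sum_iT_i^2$, $Q_{c,s}(T):=s^2\mathcal{I}-2sT_0+|T|^2$ on $\operatorname{dom}(T^2)$ (note $Q_{c,s}(\overline{T})=Q_{c,s}(T)$). $\rho_S(T)$: the $s\in\mathbb{H}$ with $Q_{c,s}(T):\operatorname{dom}(T^2)\to V$ bijective, $Q_{c,s}^{-1}(T)$ the inverse. For $s\in\rho_S(T)$ and an operator $A\in\{T,\overline{T}\}$ with components $A_0,\dots,A_3$: $S_L^{-1}(s,A):=(s\mathcal{I}-\overline{A})Q_{c,s}^{-1}(T)$ and $S_R^{-1}(s,A):=sQ_{c,s}^{-1}(T)-\sum_{i=0}^3A_iQ_{c,s}^{-1}(T)\overline{e_i}$ (with $e_0=1$, $\overline{\overline{T}}=T$). *)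

theory Defs
  imports "HOL-Analysis.Analysis"
begin

datatype quat = Quat (Re0: real) (Im1: real) (Im2: real) (Im3: real)

lemma quat_eq_iff: "x = y \<longleftrightarrow> Re0 x = Re0 y \<and> Im1 x = Im1 y \<and> Im2 x = Im2 y \<and> Im3 x = Im3 y"
  by (cases x; cases y) auto

instantiation quat :: division_ring
begin

definition "0 = Quat 0 0 0 0"
definition "1 = Quat 1 0 0 0"
definition "x + y = Quat (Re0 x + Re0 y) (Im1 x + Im1 y) (Im2 x + Im2 y) (Im3 x + Im3 y)"
definition "- x = Quat (- Re0 x) (- Im1 x) (- Im2 x) (- Im3 x)"
definition "x - y = Quat (Re0 x - Re0 y) (Im1 x - Im1 y) (Im2 x - Im2 y) (Im3 x - Im3 y)"
definition "x * y = Quat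
   (Re0 x * Re0 y - Im1 x * Im1 y - Im2 x * Im2 y - Im3 x * Im3 y)
   (Re0 x * Im1 y + Im1 x * Re0 y + Im2 x * Im3 y - Im3 x * Im2 y)
   (Re0 x * Im2 y - Im1 x * Im3 y + Im2 x * Re0 y + Im3 x * Im1 y)
   (Re0 x * Im3 y + Im1 x * Im2 y - Im2 x * Im1 y + Im3 x * Re0 y)"
definition "inverse x = (let n = (Re0 x)\<^sup>2 + (Im1 x)\<^sup>2 + (Im2 x)\<^sup>2 + (Im3 x)\<^sup>2 in
   Quat (Re0 x / n) (- Im1 x / n) (- Im2 x / n) (- Im3 x / n))"
definition "x div y = x * inverse (y :: quat)"

lemma quat_norm_pos: "x \<noteq> 0 \<Longrightarrow> (Re0 x)\<^sup>2 + (Im1 x)\<^sup>2 + (Im2 x)\<^sup>2 + (Im3 x)\<^sup>2 \<noteq> 0"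
  by (cases x) (auto simp: zero_quat_def add_nonneg_eq_0_iff)

instance
proof
  fix a b c :: quat
  show "a * b * c = a * (b * c)" by (simp add: times_quat_def algebra_simps)
  show "1 * a = a" by (cases a) (simp add: times_quat_def one_quat_def)
  show "a * 1 = a" by (cases a) (simp add: times_quat_def one_quat_def)
  show "(a + b) * c = a * c + b * c" by (simp add: times_quat_def plus_quat_def algebra_simps)
  show "a * (b + c) = a * b + a * c" by (simp add: times_quat_def plus_quat_def algebra_simps)
  show "a + b + c = a + (b + c)" by (simp add: plus_quat_def algebra_simps)
  show "a + b = b + a" by (simp add: plus_quat_def algebra_simps)
  show "0 + a = a" by (cases a) (simp add: plus_quat_def zero_quat_def)
  show "- a + a = 0" by (simp add: plus_quat_def uminus_quat_def zero_quat_def)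
  show "a - b = a + - b" by (simp add: plus_quat_def uminus_quat_def minus_quat_def)
  show "(0::quat) \<noteq> 1" by (simp add: zero_quat_def one_quat_def)
  show "inverse (0::quat) = 0" by (simp add: inverse_quat_def zero_quat_def)
next
  fix x y :: quat
  show "x div y = x * inverse y" by (simp add: divide_quat_def)
next
  fix a :: quat assume a: "a \<noteq> 0"
  obtain w x y z where aq: "a = Quat w x y z" by (cases a)
  have n: "w\<^sup>2 + x\<^sup>2 + y\<^sup>2 + z\<^sup>2 \<noteq> 0" using quat_norm_pos[OF a] aq by simp
  define n where "n = w\<^sup>2 + x\<^sup>2 + y\<^sup>2 + z\<^sup>2"
  have n0: "n \<noteq> 0" using n n_def by simp
  have e1: "w * w + x * x + y * y + z * z = n" by (simp add: n_def power2_eq_square)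
  have "inverse a = Quat (w / n) (- x / n) (- y / n) (- z / n)"
    by (simp add: inverse_quat_def aq n_def Let_def)
  note iv = this
  have c1: "w / n * w - - x / n * x - - y / n * y - - z / n * z = 1"
    using n0 e1 by (simp add: field_simps)
  have c2: "w * (w / n) - x * (- x / n) - y * (- y / n) - z * (- z / n) = 1"
    using n0 e1 by (simp add: field_simps)
  show "inverse a * a = 1" unfolding iv using c1
    by (simp add: times_quat_def one_quat_def aq algebra_simps)
  show "a * inverse a = 1" unfolding iv using c2
    by (simp add: times_quat_def one_quat_def aq algebra_simps)
qed
end

definition qreal :: "real \<Rightarrow> quat" where "qreal r = Quat r 0 0 0"

definition qcnj :: "quat \<Rightarrow> quat" where
  "qcnj x = Quat (Re0 x) (- Im1 x) (- Im2 x) (- Im3 x)"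

definition qnorm :: "quat \<Rightarrow> real" where
  "qnorm x = sqrt ((Re0 x)\<^sup>2 + (Im1 x)\<^sup>2 + (Im2 x)\<^sup>2 + (Im3 x)\<^sup>2)"

definition qe :: "nat \<Rightarrow> quat" where
  "qe i = (if i = 0 then Quat 1 0 0 0 else if i = 1 then Quat 0 1 0 0
           else if i = 2 then Quat 0 0 1 0 else Quat 0 0 0 1)"

definition qS :: "quat set" where "qS = {J. Re0 J = 0 \<and> qnorm J = 1}"

definition qsphere :: "quat \<Rightarrow> quat set" where
  "qsphere p = {qreal (Re0 p) + J * qreal (qnorm (p - qreal (Re0 p))) | J. J \<in> qS}"

definition SLq :: "quat \<Rightarrow> quat \<Rightarrow> quat" where
  "SLq p s = (p - qcnj s) * inverse (p\<^sup>2 - 2 * qreal (Re0 s) * p + qreal ((qnorm s)\<^sup>2))"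

definition SRq :: "quat \<Rightarrow> quat \<Rightarrow> quat" where
  "SRq s p = inverse (s\<^sup>2 - 2 * qreal (Re0 p) * s + qreal ((qnorm p)\<^sup>2)) * (s - qcnj p)"

definition two_sided_qbanach :: "(quat \<Rightarrow> 'v::banach \<Rightarrow> 'v) \<Rightarrow> ('v \<Rightarrow> quat \<Rightarrow> 'v) \<Rightarrow> bool" where
  "two_sided_qbanach lm rm \<longleftrightarrow>
     (\<forall>a v w. lm a (v + w) = lm a v + lm a w) \<and>
     (\<forall>a b v. lm (a + b) v = lm a v + lm b v) \<and>
     (\<forall>a b v. lm (a * b) v = lm a (lm b v)) \<and>
     (\<forall>v. lm 1 v = v) \<and>
     (\<forall>a v w. rm (v + w) a = rm v a + rm w a) \<and>
     (\<forall>a b v. rm v (a + b) = rm v a + rm v b) \<and>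
     (\<forall>a b v. rm v (a * b) = rm (rm v a) b) \<and>
     (\<forall>v. rm v 1 = v) \<and>
     (\<forall>a b v. rm (lm a v) b = lm a (rm v b)) \<and>
     (\<forall>r v. lm (qreal r) v = r *\<^sub>R v \<and> rm v (qreal r) = r *\<^sub>R v) \<and>
     (\<forall>a v. norm (lm a v) = qnorm a * norm v \<and> norm (rm v a) = qnorm a * norm v)"

definition two_sided_subspace :: "(quat \<Rightarrow> 'v::banach \<Rightarrow> 'v) \<Rightarrow> ('v \<Rightarrow> quat \<Rightarrow> 'v) \<Rightarrow> 'v set \<Rightarrow> bool" where
  "two_sided_subspace lm rm D \<longleftrightarrow> 0 \<in> D \<and> (\<forall>v\<in>D. \<forall>w\<in>D. v + w \<in> D) \<and>
     (\<forall>a. \<forall>v\<in>D. lm a v \<in> D \<and> rm v a \<in> D)"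

definition two_sided_linear_on ::
  "(quat \<Rightarrow> 'v::banach \<Rightarrow> 'v) \<Rightarrow> ('v \<Rightarrow> quat \<Rightarrow> 'v) \<Rightarrow> 'v set \<Rightarrow> ('v \<Rightarrow> 'v) \<Rightarrow> bool" where
  "two_sided_linear_on lm rm D A \<longleftrightarrow> (\<forall>v\<in>D. \<forall>w\<in>D. A (v + w) = A v + A w) \<and>
     (\<forall>a. \<forall>v\<in>D. A (lm a v) = lm a (A v) \<and> A (rm v a) = rm (A v) a)"

definition right_linear_on ::
  "('v::banach \<Rightarrow> quat \<Rightarrow> 'v) \<Rightarrow> 'v set \<Rightarrow> ('v \<Rightarrow> 'v) \<Rightarrow> bool" where
  "right_linear_on rm D A \<longleftrightarrow> (\<forall>v\<in>D. \<forall>w\<in>D. A (v + w) = A v + A w) \<and>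
     (\<forall>a. \<forall>v\<in>D. A (rm v a) = rm (A v) a)"

text \<open>An operator is given by its domain D and its components Tc 0, ..., Tc 3:
  T = T_0 + e_1 T_1 + e_2 T_2 + e_3 T_3 on D.\<close>
definition opT :: "(quat \<Rightarrow> 'v::banach \<Rightarrow> 'v) \<Rightarrow> (nat \<Rightarrow> 'v \<Rightarrow> 'v) \<Rightarrow> 'v \<Rightarrow> 'v" where
  "opT lm Tc v = (\<Sum>i<4. lm (qe i) (Tc i v))"

definition dom2 :: "'v set \<Rightarrow> (quat \<Rightarrow> 'v::banach \<Rightarrow> 'v) \<Rightarrow> (nat \<Rightarrow> 'v \<Rightarrow> 'v) \<Rightarrow> 'v set" where
  "dom2 D lm Tc = {v \<in> D. opT lm Tc v \<in> D}"

definition KC :: "(quat \<Rightarrow> 'v::banach \<Rightarrow> 'v) \<Rightarrow> ('v \<Rightarrow> quat \<Rightarrow> 'v) \<Rightarrow> 'v set \<Rightarrow> (nat \<Rightarrow> 'v \<Rightarrow> 'v) \<Rightarrow> bool" where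
  "KC lm rm D Tc \<longleftrightarrow>
     two_sided_subspace lm rm D \<and>
     right_linear_on rm D (opT lm Tc) \<and>
     closed {(v, opT lm Tc v) | v. v \<in> D} \<and>
     (\<forall>i<4. two_sided_linear_on lm rm D (Tc i)) \<and>
     (\<forall>j<4. dom2 D lm Tc \<subseteq> {v \<in> D. Tc j v \<in> D}) \<and>
     (\<forall>i<4. \<forall>j<4. \<forall>v\<in>dom2 D lm Tc. Tc i (Tc j v) = Tc j (Tc i v))"

definition cnjop :: "(nat \<Rightarrow> 'v::banach \<Rightarrow> 'v) \<Rightarrow> nat \<Rightarrow> 'v \<Rightarrow> 'v" where
  "cnjop Tc i = (if i = 0 then Tc 0 else (\<lambda>v. - Tc i v))"

text \<open>Q_{c,s}(T) = s^2 I - 2 s T_0 + |T|^2 (meaningful on dom(T^2)).\<close>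
definition Qc :: "(quat \<Rightarrow> 'v::banach \<Rightarrow> 'v) \<Rightarrow> (nat \<Rightarrow> 'v \<Rightarrow> 'v) \<Rightarrow> quat \<Rightarrow> 'v \<Rightarrow> 'v" where
  "Qc lm Tc s v = lm (s\<^sup>2) v - lm (2 * s) (Tc 0 v) + (\<Sum>i<4. Tc i (Tc i v))"

definition rhoS :: "'v set \<Rightarrow> (quat \<Rightarrow> 'v::banach \<Rightarrow> 'v) \<Rightarrow> (nat \<Rightarrow> 'v \<Rightarrow> 'v) \<Rightarrow> quat set" where
  "rhoS D lm Tc = {s. bij_betw (Qc lm Tc s) (dom2 D lm Tc) UNIV}"

definition Qinv :: "'v set \<Rightarrow> (quat \<Rightarrow> 'v::banach \<Rightarrow> 'v) \<Rightarrow> (nat \<Rightarrow> 'v \<Rightarrow> 'v) \<Rightarrow> quat \<Rightarrow> 'v \<Rightarrow> 'v" where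
  "Qinv D lm Tc s = the_inv_into (dom2 D lm Tc) (Qc lm Tc s)"

text \<open>S_L^{-1}(s,A) = (s I - conj A) Q_{c,s}^{-1}(T), for A given by components Ac
  (Ac = Tc for A = T, Ac = cnjop Tc for A = conj T).\<close>
definition SLop :: "'v set \<Rightarrow> (quat \<Rightarrow> 'v::banach \<Rightarrow> 'v) \<Rightarrow> (nat \<Rightarrow> 'v \<Rightarrow> 'v) \<Rightarrow> (nat \<Rightarrow> 'v \<Rightarrow> 'v)
    \<Rightarrow> quat \<Rightarrow> 'v \<Rightarrow> 'v" where
  "SLop D lm Tc Ac s v = lm s (Qinv D lm Tc s v) - opT lm (cnjop Ac) (Qinv D lm Tc s v)"

text \<open>S_R^{-1}(s,A) = s Q_{c,s}^{-1}(T) - sum_i A_i Q_{c,s}^{-1}(T) conj(e_i),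
  where (B a)(v) = B(a v) for an operator B and a quaternion a.\<close>
definition SRop :: "'v set \<Rightarrow> (quat \<Rightarrow> 'v::banach \<Rightarrow> 'v) \<Rightarrow> (nat \<Rightarrow> 'v \<Rightarrow> 'v) \<Rightarrow> (nat \<Rightarrow> 'v \<Rightarrow> 'v)
    \<Rightarrow> quat \<Rightarrow> 'v \<Rightarrow> 'v" where
  "SRop D lm Tc Ac s v = lm s (Qinv D lm Tc s v)
      - (\<Sum>i<4. Ac i (Qinv D lm Tc s (lm (qcnj (qe i)) v)))"

end

theory Submission
  imports Defs
begin

(* For s \<notin> [p] both quadratic denominators are invertible, and a computation in the
   quaternions gives X p - s X = 1 for X = S_L^{-1}(p,s), as well as S_R^{-1}(s,p) = -X.
   Writing v = Q_{c,p}(T) w, the left-hand side is Q_{c,s}^{-1}(T) applied to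
   X Q_{c,p}(T) w - Q_{c,s}(T) (X w); there the |T|^2 terms cancel, and X p - s X = 1 leaves
   (p + s) w - 2 T_0 w = (p w - Tbar w) + (s w - T w). This is the first operator expression
   once Q_{c,s}^{-1}(T) is moved past left multiplication by s and past the components T_i.
   The latter requires every T_i T_j to be defined on Q_{c,s}^{-1}(T) D, which follows from
   T Tbar = |T|^2. The second identity only exchanges the roles of T and Tbar. *)

lemma quat_two: "(2::quat) = Quat 2 0 0 0"
proof -
  have "(1::quat) + 1 = Quat 2 0 0 0"
    by (simp add: one_quat_def plus_quat_def)
  then show ?thesis
    by simp
qed

lemma quat_sel_simps:
  "Re0 (x * y) = Re0 x * Re0 y - Im1 x * Im1 y - Im2 x * Im2 y - Im3 x * Im3 y"
  "Im1 (x * y) = Re0 x * Im1 y + Im1 x * Re0 y + Im2 x * Im3 y - Im3 x * Im2 y"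
  "Im2 (x * y) = Re0 x * Im2 y - Im1 x * Im3 y + Im2 x * Re0 y + Im3 x * Im1 y"
  "Im3 (x * y) = Re0 x * Im3 y + Im1 x * Im2 y - Im2 x * Im1 y + Im3 x * Re0 y"
  "Re0 (x + y) = Re0 x + Re0 y" "Im1 (x + y) = Im1 x + Im1 y"
  "Im2 (x + y) = Im2 x + Im2 y" "Im3 (x + y) = Im3 x + Im3 y"
  "Re0 (x - y) = Re0 x - Re0 y" "Im1 (x - y) = Im1 x - Im1 y"
  "Im2 (x - y) = Im2 x - Im2 y" "Im3 (x - y) = Im3 x - Im3 y"
  "Re0 (- x) = - Re0 x" "Im1 (- x) = - Im1 x" "Im2 (- x) = - Im2 x" "Im3 (- x) = - Im3 x"
  "Re0 0 = 0" "Im1 0 = 0" "Im2 0 = 0" "Im3 0 = 0"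
  "Re0 1 = 1" "Im1 1 = 0" "Im2 1 = 0" "Im3 1 = 0"
  "Re0 2 = 2" "Im1 2 = 0" "Im2 2 = 0" "Im3 2 = 0"
  "Re0 (qreal r) = r" "Im1 (qreal r) = 0" "Im2 (qreal r) = 0" "Im3 (qreal r) = 0"
  "Re0 (qcnj x) = Re0 x" "Im1 (qcnj x) = - Im1 x" "Im2 (qcnj x) = - Im2 x" "Im3 (qcnj x) = - Im3 x"
  by (simp_all add: times_quat_def plus_quat_def minus_quat_def uminus_quat_def zero_quat_def
      one_quat_def qreal_def qcnj_def quat_two)

lemma qnorm_power2: "(qnorm x)\<^sup>2 = (Re0 x)\<^sup>2 + (Im1 x)\<^sup>2 + (Im2 x)\<^sup>2 + (Im3 x)\<^sup>2"
  unfolding qnorm_def by simp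

lemma qsphere_memI:
  assumes "Re0 s = Re0 p"
    and "(Im1 s)\<^sup>2 + (Im2 s)\<^sup>2 + (Im3 s)\<^sup>2 = (Im1 p)\<^sup>2 + (Im2 p)\<^sup>2 + (Im3 p)\<^sup>2"
  shows "s \<in> qsphere p"
proof -
  define r where "r = sqrt ((Im1 s)\<^sup>2 + (Im2 s)\<^sup>2 + (Im3 s)\<^sup>2)"
  have r_eq: "qnorm (p - qreal (Re0 p)) = r"
    using assms(2) by (simp add: quat_sel_simps qnorm_def r_def)
  define J where
    "J = (if r = 0 then Quat 0 1 0 0 else Quat 0 (Im1 s / r) (Im2 s / r) (Im3 s / r))"
  have "J \<in> qS \<and> s = qreal (Re0 p) + J * qreal r"
  proof (cases "r = 0")
    case True
    then have "Im1 s = 0" "Im2 s = 0" "Im3 s = 0"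
      by (simp_all add: r_def add_nonneg_eq_0_iff)
    with True assms(1) show ?thesis
      by (simp add: quat_sel_simps J_def qS_def qnorm_def quat_eq_iff)
  next
    case False
    have r2: "r\<^sup>2 = (Im1 s)\<^sup>2 + (Im2 s)\<^sup>2 + (Im3 s)\<^sup>2"
      by (simp add: r_def)
    have "(Im1 s / r)\<^sup>2 + (Im2 s / r)\<^sup>2 + (Im3 s / r)\<^sup>2 = 1"
      using False by (simp add: power_divide add_divide_distrib[symmetric] r2[symmetric])
    with False assms(1) show ?thesis
      by (simp add: quat_sel_simps J_def qS_def qnorm_def quat_eq_iff)
  qed
  then show ?thesis
    unfolding qsphere_def r_eq by blast
qed

lemma qchar_poly_eq_zero_imp:
  assumes "x\<^sup>2 - 2 * qreal (Re0 y) * x + qreal ((qnorm y)\<^sup>2) = 0"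
  shows "Re0 x = Re0 y"
    and "(Im1 x)\<^sup>2 + (Im2 x)\<^sup>2 + (Im3 x)\<^sup>2 = (Im1 y)\<^sup>2 + (Im2 y)\<^sup>2 + (Im3 y)\<^sup>2"
proof -
  have re: "(Re0 x - Re0 y)\<^sup>2 + ((Im1 y)\<^sup>2 + (Im2 y)\<^sup>2 + (Im3 y)\<^sup>2)
      = (Im1 x)\<^sup>2 + (Im2 x)\<^sup>2 + (Im3 x)\<^sup>2"
    using arg_cong[OF assms, of Re0] unfolding qnorm_power2
    by (simp add: quat_sel_simps power2_eq_square algebra_simps)
  have im: "(Re0 x - Re0 y) * Im1 x = 0" "(Re0 x - Re0 y) * Im2 x = 0" "(Re0 x - Re0 y) * Im3 x = 0"
    using arg_cong[OF assms, of Im1] arg_cong[OF assms, of Im2] arg_cong[OF assms, of Im3]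
    by (simp_all add: quat_sel_simps power2_eq_square algebra_simps)
  show "Re0 x = Re0 y"
  proof (rule ccontr)
    assume "Re0 x \<noteq> Re0 y"
    then have "Im1 x = 0" "Im2 x = 0" "Im3 x = 0"
      using im by simp_all
    with re \<open>Re0 x \<noteq> Re0 y\<close> show False
      by (smt (verit) zero_le_power2 zero_less_power2)
  qed
  with re show "(Im1 x)\<^sup>2 + (Im2 x)\<^sup>2 + (Im3 x)\<^sup>2 = (Im1 y)\<^sup>2 + (Im2 y)\<^sup>2 + (Im3 y)\<^sup>2"
    by simp
qed

lemma SLq_denominator_nonzero:
  "s \<notin> qsphere p \<Longrightarrow> p\<^sup>2 - 2 * qreal (Re0 s) * p + qreal ((qnorm s)\<^sup>2) \<noteq> 0"
  using qchar_poly_eq_zero_imp[of p s] qsphere_memI[of s p] by auto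

lemma SRq_denominator_nonzero:
  "s \<notin> qsphere p \<Longrightarrow> s\<^sup>2 - 2 * qreal (Re0 p) * s + qreal ((qnorm p)\<^sup>2) \<noteq> 0"
  using qchar_poly_eq_zero_imp[of s p] qsphere_memI[of s p] by auto

lemma SLq_commutator:
  assumes "s \<notin> qsphere p"
  shows "SLq p s * p - s * SLq p s = 1"
proof -
  define a where "a = p\<^sup>2 - 2 * qreal (Re0 s) * p + qreal ((qnorm s)\<^sup>2)"
  have "a \<noteq> 0"
    unfolding a_def using assms by (rule SLq_denominator_nonzero)
  have "a * p = p * a"
    by (simp add: quat_sel_simps a_def quat_eq_iff power2_eq_square algebra_simps)
  then have p_inv_a: "inverse a * p = p * inverse a"
    by (rule mult_commute_imp_mult_inverse_commute)
  have SLq_eq: "SLq p s = (p - qcnj s) * inverse a"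
    by (simp add: SLq_def a_def)
  have "SLq p s * p - s * SLq p s = ((p - qcnj s) * p - s * (p - qcnj s)) * inverse a"
    unfolding SLq_eq by (simp add: mult.assoc p_inv_a left_diff_distrib)
  also have "(p - qcnj s) * p - s * (p - qcnj s) = a"
    unfolding a_def qnorm_power2
    by (simp add: quat_sel_simps quat_eq_iff power2_eq_square algebra_simps)
  finally show ?thesis
    using \<open>a \<noteq> 0\<close> by simp
qed

lemma SRq_eq_minus_SLq:
  assumes "s \<notin> qsphere p"
  shows "SRq s p = - SLq p s"
proof -
  define a where "a = p\<^sup>2 - 2 * qreal (Re0 s) * p + qreal ((qnorm s)\<^sup>2)"
  define b where "b = s\<^sup>2 - 2 * qreal (Re0 p) * s + qreal ((qnorm p)\<^sup>2)"
  have "a \<noteq> 0" "b \<noteq> 0"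
    unfolding a_def b_def using assms by (rule SLq_denominator_nonzero, rule SRq_denominator_nonzero)
  have "(s - qcnj p) * a = - (b * (p - qcnj s))"
    unfolding a_def b_def qnorm_power2
    by (simp add: quat_sel_simps quat_eq_iff power2_eq_square algebra_simps)
  then have "inverse b * (s - qcnj p) * a * inverse a = - (inverse b * b * (p - qcnj s) * inverse a)"
    by (simp add: mult.assoc)
  with \<open>a \<noteq> 0\<close> \<open>b \<noteq> 0\<close> show ?thesis
    by (simp add: SRq_def SLq_def a_def b_def mult.assoc)
qed

lemma qe_0 [simp]: "qe 0 = 1"
  by (simp add: qe_def one_quat_def)

lemma qcnj_1 [simp]: "qcnj 1 = 1"
  by (simp add: quat_sel_simps quat_eq_iff)

lemma qcnj_qe: "k \<noteq> 0 \<Longrightarrow> qcnj (qe k) = - qe k"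
  by (simp add: quat_sel_simps qe_def qcnj_def quat_eq_iff)

lemma less_4_cases: "(k::nat) < 4 \<longleftrightarrow> k = 0 \<or> k = 1 \<or> k = 2 \<or> k = 3"
  by auto

lemma sum_lessThan_4: "(\<Sum>k<4::nat. f k) = f 0 + f 1 + f 2 + f 3"
  by (simp add: eval_nat_numeral ac_simps)

lemma qe_mult_qcnj_sym:
  "j < 4 \<Longrightarrow> k < 4 \<Longrightarrow> qe j * qcnj (qe k) + qe k * qcnj (qe j) = (if j = k then 2 else 0)"
  unfolding less_4_cases by (auto simp: quat_sel_simps qe_def qcnj_def quat_eq_iff)

lemma Re0_qe_mult_qcnj:
  "j < 4 \<Longrightarrow> k < 4 \<Longrightarrow> Re0 (qe j * qcnj (qe k)) = (if j = k then 1 else 0)"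
  unfolding less_4_cases by (auto simp: quat_sel_simps qe_def qcnj_def)

lemma sum_qe_conjugation: "(\<Sum>m<4. qe m * q * qcnj (qe m)) = qreal (4 * Re0 q)"
  unfolding sum_lessThan_4 by (simp add: quat_sel_simps qe_def qcnj_def quat_eq_iff)

locale two_sided_qmodule =
  fixes lm :: "quat \<Rightarrow> 'v::banach \<Rightarrow> 'v" and rm :: "'v \<Rightarrow> quat \<Rightarrow> 'v"
  assumes two_sided: "two_sided_qbanach lm rm"
begin

lemma lm_add: "lm a (v + w) = lm a v + lm a w"
  using two_sided by (simp add: two_sided_qbanach_def)

lemma lm_add_scalar: "lm (a + b) v = lm a v + lm b v"
  using two_sided by (simp add: two_sided_qbanach_def)

lemma lm_mult: "lm (a * b) v = lm a (lm b v)"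
  using two_sided by (simp add: two_sided_qbanach_def)

lemma lm_one [simp]: "lm 1 v = v"
  using two_sided by (simp add: two_sided_qbanach_def)

lemma lm_qreal: "lm (qreal r) v = r *\<^sub>R v"
  using two_sided by (simp add: two_sided_qbanach_def)

lemma additive_lm: "Modules.additive (lm a)"
  by unfold_locales (rule lm_add)

lemma additive_lm_scalar: "Modules.additive (\<lambda>a. lm a v)"
  by unfold_locales (rule lm_add_scalar)

lemmas lm_minus = Modules.additive.minus[OF additive_lm]
  and lm_diff = Modules.additive.diff[OF additive_lm]
  and lm_sum = Modules.additive.sum[OF additive_lm]
  and lm_minus_scalar = Modules.additive.minus[OF additive_lm_scalar]
  and lm_diff_scalar = Modules.additive.diff[OF additive_lm_scalar]
  and lm_zero_scalar [simp] = Modules.additive.zero[OF additive_lm_scalar]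
  and lm_sum_scalar = Modules.additive.sum[OF additive_lm_scalar]

lemma lm_2: "lm 2 v = v + v"
  using lm_add_scalar[of 1 1 v] by simp

lemma opT_cnjop: "opT lm (cnjop A) v = (\<Sum>k<4. lm (qcnj (qe k)) (A k v))"
  unfolding opT_def by (intro sum.cong refl) (simp add: cnjop_def qcnj_qe lm_minus lm_minus_scalar)

lemma opT_plus_opT_cnjop: "opT lm A v + opT lm (cnjop A) v = A 0 v + A 0 v"
  unfolding opT_def sum_lessThan_4 by (simp add: cnjop_def lm_minus)

lemma sum_qe_qcnj_symmetric:
  assumes "\<And>j k. j < 4 \<Longrightarrow> k < 4 \<Longrightarrow> Z j k = Z k j"
  shows "(\<Sum>j<4. \<Sum>k<4. lm (qe j * qcnj (qe k)) (Z j k)) = (\<Sum>j<4. Z j j)"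
proof -
  let ?S = "\<Sum>j<4. \<Sum>k<4. lm (qe j * qcnj (qe k)) (Z j k)"
  have "?S = (\<Sum>j<4. \<Sum>k<4. lm (qe k * qcnj (qe j)) (Z j k))"
    by (subst sum.swap) (simp add: assms)
  then have "?S + ?S = (\<Sum>j<4. \<Sum>k<4. lm (qe j * qcnj (qe k) + qe k * qcnj (qe j)) (Z j k))"
    by (simp add: lm_add_scalar sum.distrib)
  also have "\<dots> = (\<Sum>j<4. Z j j + Z j j)"
    by (intro sum.cong refl) (simp add: qe_mult_qcnj_sym lm_2 if_distrib if_distribR cong: if_cong)
  finally show ?thesis
    by (simp add: sum.distrib scaleR_2[symmetric] scaleR_sum_right[symmetric])
qed

end

lemma cnjop_cnjop [simp]: "cnjop (cnjop A) = A"
  by (intro ext) (simp add: cnjop_def)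

locale KC_operator = two_sided_qmodule +
  fixes D :: "'v::banach set" and Tc :: "nat \<Rightarrow> 'v \<Rightarrow> 'v"
  assumes KC: "KC lm rm D Tc"
begin

abbreviation T :: "'v \<Rightarrow> 'v" where "T \<equiv> opT lm Tc"
abbreviation Tbar :: "'v \<Rightarrow> 'v" where "Tbar \<equiv> opT lm (cnjop Tc)"
abbreviation domT2 :: "'v set" where "domT2 \<equiv> dom2 D lm Tc"

definition Tabs2 :: "'v \<Rightarrow> 'v" where "Tabs2 x = (\<Sum>i<4. Tc i (Tc i x))"

lemma Qc_eq: "Qc lm Tc s x = lm (s\<^sup>2) x - lm (2 * s) (Tc 0 x) + Tabs2 x"
  by (simp add: Qc_def Tabs2_def)

lemma D_subspace: "two_sided_subspace lm rm D"
  using KC by (simp add: KC_def)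

lemma zero_in_D: "0 \<in> D"
  and add_in_D: "v \<in> D \<Longrightarrow> w \<in> D \<Longrightarrow> v + w \<in> D"
  and lm_in_D: "v \<in> D \<Longrightarrow> lm a v \<in> D"
  using D_subspace by (simp_all add: two_sided_subspace_def)

lemma minus_in_D: "v \<in> D \<Longrightarrow> - v \<in> D"
  using lm_in_D[of v "- 1"] by (simp add: lm_minus_scalar)

lemma diff_in_D: "v \<in> D \<Longrightarrow> w \<in> D \<Longrightarrow> v - w \<in> D"
  using add_in_D[OF _ minus_in_D] by simp

lemma sum_in_D: "(\<And>k. k \<in> A \<Longrightarrow> f k \<in> D) \<Longrightarrow> sum f A \<in> D"
  by (induction A rule: infinite_finite_induct) (auto intro: zero_in_D add_in_D)

lemma Tc_add: "i < 4 \<Longrightarrow> v \<in> D \<Longrightarrow> w \<in> D \<Longrightarrow> Tc i (v + w) = Tc i v + Tc i w"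
  and Tc_lm: "i < 4 \<Longrightarrow> v \<in> D \<Longrightarrow> Tc i (lm a v) = lm a (Tc i v)"
  using KC by (simp_all add: KC_def two_sided_linear_on_def)

lemma Tc_zero: "i < 4 \<Longrightarrow> Tc i 0 = 0"
  using Tc_add[of i 0 0] zero_in_D by simp

lemma Tc_minus: "i < 4 \<Longrightarrow> v \<in> D \<Longrightarrow> Tc i (- v) = - Tc i v"
  using Tc_add[of i v "- v"] minus_in_D[of v] Tc_zero[of i] by (metis add.right_inverse minus_unique)

lemma Tc_diff: "i < 4 \<Longrightarrow> v \<in> D \<Longrightarrow> w \<in> D \<Longrightarrow> Tc i (v - w) = Tc i v - Tc i w"
  using Tc_add[of i v "- w"] Tc_minus[of i w] minus_in_D[of w] by simp

lemma Tc_sum: "i < 4 \<Longrightarrow> \<forall>k\<in>A. f k \<in> D \<Longrightarrow> Tc i (sum f A) = (\<Sum>k\<in>A. Tc i (f k))"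
  by (induction A rule: infinite_finite_induct) (auto simp: Tc_zero Tc_add sum_in_D)

lemma domT2_iff: "x \<in> domT2 \<longleftrightarrow> x \<in> D \<and> T x \<in> D"
  by (simp add: dom2_def)

lemma Tc_in_D: "x \<in> domT2 \<Longrightarrow> j < 4 \<Longrightarrow> Tc j x \<in> D"
  using KC by (auto simp: KC_def)

lemma Tc_commute: "x \<in> domT2 \<Longrightarrow> i < 4 \<Longrightarrow> j < 4 \<Longrightarrow> Tc i (Tc j x) = Tc j (Tc i x)"
  using KC by (simp add: KC_def)

lemma T_lm: "x \<in> D \<Longrightarrow> T (lm c x) = (\<Sum>j<4. lm (qe j * c) (Tc j x))"
  unfolding opT_def by (intro sum.cong refl) (simp add: Tc_lm lm_mult)

lemma domT2_add: "x \<in> domT2 \<Longrightarrow> y \<in> domT2 \<Longrightarrow> x + y \<in> domT2"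
  by (auto simp: domT2_iff opT_def Tc_add lm_add sum.distrib intro: add_in_D)

lemma domT2_lm: "x \<in> domT2 \<Longrightarrow> lm c x \<in> domT2"
  by (auto simp: domT2_iff T_lm intro!: lm_in_D sum_in_D Tc_in_D)

lemma Tabs2_add: "x \<in> domT2 \<Longrightarrow> y \<in> domT2 \<Longrightarrow> Tabs2 (x + y) = Tabs2 x + Tabs2 y"
  unfolding Tabs2_def sum.distrib[symmetric]
  by (intro sum.cong refl) (simp add: Tc_add domT2_iff Tc_in_D)

lemma Tabs2_lm: "x \<in> domT2 \<Longrightarrow> Tabs2 (lm c x) = lm c (Tabs2 x)"
  unfolding Tabs2_def lm_sum by (intro sum.cong refl) (simp add: Tc_lm domT2_iff Tc_in_D)

lemma Qc_add: "x \<in> domT2 \<Longrightarrow> y \<in> domT2 \<Longrightarrow> Qc lm Tc s (x + y) = Qc lm Tc s x + Qc lm Tc s y"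
  by (simp add: Qc_eq Tabs2_add Tc_add domT2_iff lm_add)

lemma Qc_lm:
  "x \<in> domT2 \<Longrightarrow> Qc lm Tc s (lm c x) = lm (s\<^sup>2 * c) x - lm (2 * s * c) (Tc 0 x) + lm c (Tabs2 x)"
  by (simp add: Qc_eq Tabs2_lm Tc_lm domT2_iff lm_mult)

context
  fixes s assumes s: "s \<in> rhoS D lm Tc"
begin

lemma Qc_bij: "bij_betw (Qc lm Tc s) domT2 UNIV"
  using s by (simp add: rhoS_def)

lemma Qinv_in_domT2: "Qinv D lm Tc s v \<in> domT2"
  unfolding Qinv_def using Qc_bij by (simp add: bij_betw_def the_inv_into_into)

lemma Qc_Qinv: "Qc lm Tc s (Qinv D lm Tc s v) = v"
  unfolding Qinv_def using Qc_bij by (simp add: bij_betw_def f_the_inv_into_f)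

lemma Qinv_Qc: "x \<in> domT2 \<Longrightarrow> Qinv D lm Tc s (Qc lm Tc s x) = x"
  unfolding Qinv_def using Qc_bij by (simp add: bij_betw_def the_inv_into_f_f)

lemma Qinv_add: "Qinv D lm Tc s (u + v) = Qinv D lm Tc s u + Qinv D lm Tc s v"
  using Qinv_Qc[of "Qinv D lm Tc s u + Qinv D lm Tc s v"]
  by (simp add: Qc_add Qinv_in_domT2 domT2_add Qc_Qinv)

lemma additive_Qinv: "Modules.additive (Qinv D lm Tc s)"
  by unfold_locales (rule Qinv_add)

lemmas Qinv_diff = Modules.additive.diff[OF additive_Qinv]
  and Qinv_sum = Modules.additive.sum[OF additive_Qinv]
  and Qinv_minus = Modules.additive.minus[OF additive_Qinv]

lemma lm_Qinv_commute:
  assumes "c * s = s * c"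
  shows "lm c (Qinv D lm Tc s v) = Qinv D lm Tc s (lm c v)"
proof -
  define x where "x = Qinv D lm Tc s v"
  have x: "x \<in> domT2"
    unfolding x_def by (rule Qinv_in_domT2)
  have "s\<^sup>2 * c = c * s\<^sup>2"
    by (metis assms mult.assoc power2_eq_square)
  moreover have "2 * s * c = c * (2 * s)"
    by (metis assms mult.assoc mult_2 mult_2_right)
  ultimately have "Qc lm Tc s (lm c x) = lm c (Qc lm Tc s x)"
    unfolding Qc_lm[OF x] by (simp add: Qc_eq lm_add lm_diff lm_mult[symmetric])
  then have "Qc lm Tc s (lm c x) = lm c v"
    by (simp add: x_def Qc_Qinv)
  then show ?thesis
    using Qinv_Qc[OF domT2_lm[OF x]] by (metis x_def)
qed

end

lemma Tbar_in_D: "y \<in> domT2 \<Longrightarrow> Tbar y \<in> D"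
  unfolding opT_cnjop by (intro sum_in_D lm_in_D Tc_in_D) auto

lemma T_Tbar:
  assumes y: "y \<in> domT2"
  shows "T (Tbar y) = Tabs2 y"
proof -
  have "T (Tbar y) = (\<Sum>j<4. lm (qe j) (Tc j (\<Sum>k<4. lm (qcnj (qe k)) (Tc k y))))"
    unfolding opT_def[of lm Tc] opT_cnjop ..
  also have "\<dots> = (\<Sum>j<4. \<Sum>k<4. lm (qe j * qcnj (qe k)) (Tc j (Tc k y)))"
    by (intro sum.cong refl) (simp add: Tc_sum lm_in_D Tc_in_D y Tc_lm lm_sum lm_mult)
  also have "\<dots> = Tabs2 y"
    unfolding Tabs2_def by (rule sum_qe_qcnj_symmetric) (simp add: Tc_commute y)
  finally show ?thesis .
qed

lemma Tabs2_in_D: "x \<in> domT2 \<Longrightarrow> Qc lm Tc s x \<in> D \<Longrightarrow> Tabs2 x \<in> D"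
  using diff_in_D[of "Qc lm Tc s x" "lm (s\<^sup>2) x - lm (2 * s) (Tc 0 x)"]
  by (simp add: Qc_eq domT2_iff diff_in_D lm_in_D Tc_in_D)

(* Y l is recovered from the twisted sums by averaging over conjugation by the units. *)
lemma in_D_of_twisted_sums_in_D:
  assumes sums: "\<And>c. (\<Sum>k<4. lm (qcnj (qe k) * c) (Y k)) \<in> D" and "l < 4"
  shows "Y l \<in> D"
proof -
  define W where "W c = (\<Sum>k<4. lm (qcnj (qe k) * c) (Y k))" for c
  have "(\<Sum>m<4. lm (qe m * qe l) (W (qcnj (qe m)))) \<in> D"
    by (intro sum_in_D lm_in_D) (simp add: W_def sums)
  also have "(\<Sum>m<4. lm (qe m * qe l) (W (qcnj (qe m))))
      = (\<Sum>k<4. \<Sum>m<4. lm (qe m * (qe l * qcnj (qe k)) * qcnj (qe m)) (Y k))"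
    unfolding W_def lm_sum by (subst sum.swap) (simp add: lm_mult[symmetric] mult.assoc)
  also have "\<dots> = (\<Sum>k<4. lm (qreal (4 * Re0 (qe l * qcnj (qe k)))) (Y k))"
    by (simp add: lm_sum_scalar[symmetric] sum_qe_conjugation)
  also have "\<dots> = 4 *\<^sub>R Y l"
    using \<open>l < 4\<close> by (simp add: Re0_qe_mult_qcnj lm_qreal if_distrib if_distribR cong: if_cong)
  finally have "lm (qreal (1 / 4)) (4 *\<^sub>R Y l) \<in> D"
    by (rule lm_in_D)
  then show ?thesis
    by (simp add: lm_qreal)
qed

(* Since T Tbar = |T|^2, the vector Tbar (lm c x) lies in dom(T^2), so T_j may be applied to it;
   this produces twisted sums of the T_j T_k x for every c. *)
lemma Tc_Tc_in_D:
  assumes x: "x \<in> domT2" and "Tabs2 x \<in> D" and j: "j < 4" and "k < 4"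
  shows "Tc j (Tc k x) \<in> D"
proof (rule in_D_of_twisted_sums_in_D[OF _ \<open>k < 4\<close>])
  fix c
  have "T (Tbar (lm c x)) \<in> D"
    using x \<open>Tabs2 x \<in> D\<close> by (simp add: T_Tbar domT2_lm Tabs2_lm lm_in_D)
  then have "Tbar (lm c x) \<in> domT2"
    using Tbar_in_D[OF domT2_lm[OF x]] by (simp add: domT2_iff)
  then have "Tc j (Tbar (lm c x)) \<in> D"
    using j by (rule Tc_in_D)
  also have "Tc j (Tbar (lm c x)) = (\<Sum>k<4. lm (qcnj (qe k) * c) (Tc j (Tc k x)))"
    using x j by (simp add: opT_cnjop Tc_sum lm_in_D Tc_in_D domT2_iff Tc_lm lm_mult)
  finally show "(\<Sum>k<4. lm (qcnj (qe k) * c) (Tc j (Tc k x))) \<in> D" .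
qed

lemma Tc_in_domT2:
  assumes "x \<in> domT2" and "Tabs2 x \<in> D" and "k < 4"
  shows "Tc k x \<in> domT2"
proof -
  have "T (Tc k x) \<in> D"
    unfolding opT_def by (intro sum_in_D lm_in_D Tc_Tc_in_D assms) simp
  with assms show ?thesis
    by (simp add: domT2_iff Tc_in_D)
qed

lemma Tc_Tabs2_commute:
  assumes x: "x \<in> domT2" and "Tabs2 x \<in> D" and i: "i < 4"
  shows "Tc i (Tabs2 x) = Tabs2 (Tc i x)"
proof -
  have "Tc i (Tabs2 x) = (\<Sum>k<4. Tc i (Tc k (Tc k x)))"
    unfolding Tabs2_def using i x \<open>Tabs2 x \<in> D\<close> by (simp add: Tc_sum Tc_Tc_in_D)
  also have "\<dots> = (\<Sum>k<4. Tc k (Tc k (Tc i x)))"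
    using x \<open>Tabs2 x \<in> D\<close> i
    by (intro sum.cong refl) (simp add: Tc_commute[OF Tc_in_domT2] Tc_commute[of x])
  finally show ?thesis
    by (simp add: Tabs2_def)
qed

lemma Tc_Qc_commute:
  assumes x: "x \<in> domT2" and "Tabs2 x \<in> D" and i: "i < 4"
  shows "Tc i (Qc lm Tc s x) = Qc lm Tc s (Tc i x)"
  using assms
  by (simp add: Qc_eq Tc_add Tc_diff Tc_lm diff_in_D lm_in_D domT2_iff Tc_in_D
      Tc_Tabs2_commute Tc_commute[of x i 0])

lemma Tc_Qinv_commute:
  assumes s: "s \<in> rhoS D lm Tc" and u: "u \<in> D" and i: "i < 4"
  shows "Tc i (Qinv D lm Tc s u) = Qinv D lm Tc s (Tc i u)"
proof -
  define x where "x = Qinv D lm Tc s u"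
  have x: "x \<in> domT2" and Qc_x: "Qc lm Tc s x = u"
    unfolding x_def using s by (rule Qinv_in_domT2, rule Qc_Qinv)
  then have "Tabs2 x \<in> D"
    using Tabs2_in_D[OF x, of s] u by simp
  then have "Qc lm Tc s (Tc i x) = Tc i u"
    using Tc_Qc_commute[OF x _ i, of s] Qc_x by simp
  then show ?thesis
    using Qinv_Qc[OF s Tc_in_domT2[OF x \<open>Tabs2 x \<in> D\<close> i]] by (simp add: x_def)
qed

lemma SRop_eq:
  assumes s: "s \<in> rhoS D lm Tc" and w: "w \<in> D" and A: "A = Tc \<or> A = cnjop Tc"
  shows "SRop D lm Tc A s w = lm s (Qinv D lm Tc s w) - Qinv D lm Tc s (opT lm (cnjop A) w)"
proof -
  have A_Qinv: "A i (Qinv D lm Tc s u) = Qinv D lm Tc s (A i u)" if "u \<in> D" "i < 4" for i u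
    using A Tc_Qinv_commute[OF s that] by (auto simp: cnjop_def Qinv_minus[OF s])
  have A_lm: "A i (lm c u) = lm c (A i u)" if "u \<in> D" "i < 4" for i c u
    using A Tc_lm[OF that(2,1)] by (auto simp: cnjop_def lm_minus)
  have "(\<Sum>i<4. A i (Qinv D lm Tc s (lm (qcnj (qe i)) w)))
      = (\<Sum>i<4. Qinv D lm Tc s (lm (qcnj (qe i)) (A i w)))"
    by (intro sum.cong refl) (simp add: A_Qinv A_lm lm_in_D w)
  also have "\<dots> = Qinv D lm Tc s (opT lm (cnjop A) w)"
    by (simp add: Qinv_sum[OF s] opT_cnjop)
  finally show ?thesis
    by (simp add: SRop_def)
qed

lemma lm_Qc_minus_Qc_lm:
  assumes X: "X * p - s * X = 1" and w: "w \<in> domT2"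
  shows "lm X (Qc lm Tc p w) - Qc lm Tc s (lm X w) = lm (p + s) w - (Tc 0 w + Tc 0 w)"
proof -
  have "X * p\<^sup>2 - s\<^sup>2 * X = (X * p - s * X) * p + s * (X * p - s * X)"
    by (simp add: power2_eq_square algebra_simps)
  then have p2: "X * p\<^sup>2 - s\<^sup>2 * X = p + s"
    using X by simp
  have "X * (2 * p) - 2 * s * X = (X * p - s * X) + (X * p - s * X)"
    by (simp add: mult_2 mult_2_right algebra_simps)
  then have p1: "X * (2 * p) - 2 * s * X = 2"
    using X by simp
  have "lm X (Qc lm Tc p w) - Qc lm Tc s (lm X w)
      = lm (X * p\<^sup>2 - s\<^sup>2 * X) w - lm (X * (2 * p) - 2 * s * X) (Tc 0 w)"
    unfolding Qc_lm[OF w] unfolding Qc_eq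
    by (simp add: lm_add lm_diff lm_mult lm_diff_scalar algebra_simps)
  also have "\<dots> = lm (p + s) w - (Tc 0 w + Tc 0 w)"
    by (simp add: p1 p2 lm_2)
  finally show ?thesis .
qed

lemma Qinv_SLq_plus_SRq_Qinv:
  assumes s: "s \<in> rhoS D lm Tc" and p: "p \<in> rhoS D lm Tc" and sp: "s \<notin> qsphere p"
  shows "Qinv D lm Tc s (lm (SLq p s) v) + lm (SRq s p) (Qinv D lm Tc p v)
       = Qinv D lm Tc s (SLop D lm Tc Tc p v) + SRop D lm Tc (cnjop Tc) s (Qinv D lm Tc p v)"
proof -
  define w where "w = Qinv D lm Tc p v"
  define X where "X = SLq p s"
  have w: "w \<in> domT2" and v: "v = Qc lm Tc p w"
    unfolding w_def using p by (rule Qinv_in_domT2, rule Qc_Qinv[symmetric])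
  have "lm (SRq s p) w = - Qinv D lm Tc s (Qc lm Tc s (lm X w))"
    using Qinv_Qc[OF s domT2_lm[OF w]]
    by (simp add: X_def SRq_eq_minus_SLq[OF sp] lm_minus_scalar)
  then have "Qinv D lm Tc s (lm X v) + lm (SRq s p) w
      = Qinv D lm Tc s (lm X (Qc lm Tc p w) - Qc lm Tc s (lm X w))"
    by (simp add: v Qinv_diff[OF s])
  also have "lm X (Qc lm Tc p w) - Qc lm Tc s (lm X w) = (lm p w - Tbar w) + (lm s w - T w)"
    using lm_Qc_minus_Qc_lm[OF SLq_commutator[OF sp] w] opT_plus_opT_cnjop[of Tc w]
    by (simp add: X_def lm_add_scalar algebra_simps)
  also have "Qinv D lm Tc s ((lm p w - Tbar w) + (lm s w - T w))
      = Qinv D lm Tc s (lm p w - Tbar w) + (lm s (Qinv D lm Tc s w) - Qinv D lm Tc s (T w))"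
    by (simp add: Qinv_add[OF s] Qinv_diff[OF s] lm_Qinv_commute[OF s])
  also have "\<dots> = Qinv D lm Tc s (SLop D lm Tc Tc p v) + SRop D lm Tc (cnjop Tc) s w"
    using w by (simp add: SLop_def SRop_eq[OF s] domT2_iff flip: w_def)
  finally show ?thesis
    by (simp only: X_def w_def)
qed

lemma SLop_SRop_cnjop_swap:
  assumes s: "s \<in> rhoS D lm Tc" and p: "p \<in> rhoS D lm Tc"
  shows "Qinv D lm Tc s (SLop D lm Tc Tc p v) + SRop D lm Tc (cnjop Tc) s (Qinv D lm Tc p v)
       = Qinv D lm Tc s (SLop D lm Tc (cnjop Tc) p v) + SRop D lm Tc Tc s (Qinv D lm Tc p v)"
  using Qinv_in_domT2[OF p, of v]
  by (simp add: SLop_def SRop_eq[OF s] domT2_iff Qinv_diff[OF s])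

end

theorem lemma3p9:
  fixes lm :: "quat \<Rightarrow> 'v::banach \<Rightarrow> 'v" and rm :: "'v \<Rightarrow> quat \<Rightarrow> 'v"
    and D :: "'v set" and Tc :: "nat \<Rightarrow> 'v \<Rightarrow> 'v" and s p :: quat
  assumes "two_sided_qbanach lm rm"
    and "KC lm rm D Tc"
    and "s \<in> rhoS D lm Tc" and "p \<in> rhoS D lm Tc"
    and "s \<notin> qsphere p"
  shows "(\<lambda>v. Qinv D lm Tc s (lm (SLq p s) v) + lm (SRq s p) (Qinv D lm Tc p v))
       = (\<lambda>v. Qinv D lm Tc s (SLop D lm Tc Tc p v) + SRop D lm Tc (cnjop Tc) s (Qinv D lm Tc p v))
   \<and> (\<lambda>v. Qinv D lm Tc s (SLop D lm Tc Tc p v) + SRop D lm Tc (cnjop Tc) s (Qinv D lm Tc p v))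
       = (\<lambda>v. Qinv D lm Tc s (SLop D lm Tc (cnjop Tc) p v) + SRop D lm Tc Tc s (Qinv D lm Tc p v))"
proof -
  interpret KC_operator lm rm D Tc
    using assms(1,2) by unfold_locales
  show ?thesis
    using Qinv_SLq_plus_SRq_Qinv[OF assms(3-5)] SLop_SRop_cnjop_swap[OF assms(3,4)] by simp
qed

end
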